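(* Let $M$ be a matroid on a finite set $S$ with primary flag $T_0\subset\cdots\subset T_k$. Then the set $\mathcal F(M)$ of free separators of $M$ equals $\bigcup_{i=1}^k [T_{i-1},T_i]\cap\mathcal F(M)$, and for each $1\leq i\leq k$, $$[T_{i-1},T_i]\cap \mathcal F(M)=\begin{cases}[T_{i-1},T_i] & \text{if } T_i \text{ covers } T_{i-1} \text{ in } \mathcal D(M),\\ \{T_{i-1},T_i\} & \text{otherwise},\end{cases}$$ so that each such interval is a Boolean algebra.
   Context: A cyclic flat of a matroid is a flat that is a union of circuits. A subset $A\subseteq S$ is a free separator of $M$ if every cyclic flat of $M$ is comparable to $A$ by inclusion; $\mathcal F(M)$ is the set of free separators ordered by inclusion. $\mathcal D(M)$ is the complete sublattice of the Boolean algebra $2^S$ generated by all cyclic flats of $M$ (it contains $\emptyset$ and $S$). A pinchpoint of a poset is an element comparable to every element. The primary flag of $M$ is the chain $T_0\subset\cdots\subset T_k$ of all pinchpoints of $\mathcal D(M)$. For $A\subseteq B\subseteq S$, $[A,B]=\{U\subseteq S: A\subseteq U\subseteq B\}$. *)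

theory Defs
  imports Main
begin

definition matroid :: "'a set \<Rightarrow> ('a set \<Rightarrow> bool) \<Rightarrow> bool" where
  "matroid S indep \<longleftrightarrow>
     finite S \<and>
     (\<forall>X. indep X \<longrightarrow> X \<subseteq> S) \<and>
     indep {} \<and>
     (\<forall>X Y. indep X \<and> Y \<subseteq> X \<longrightarrow> indep Y) \<and>
     (\<forall>X Y. indep X \<and> indep Y \<and> card X < card Y \<longrightarrow>
        (\<exists>e\<in>Y - X. indep (insert e X)))"

definition mrank :: "('a set \<Rightarrow> bool) \<Rightarrow> 'a set \<Rightarrow> nat" where
  "mrank indep X = Max {card Y | Y. Y \<subseteq> X \<and> indep Y}"

definition circuit :: "'a set \<Rightarrow> ('a set \<Rightarrow> bool) \<Rightarrow> 'a set \<Rightarrow> bool" where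
  "circuit S indep C \<longleftrightarrow> C \<subseteq> S \<and> \<not> indep C \<and> (\<forall>x\<in>C. indep (C - {x}))"

definition flat :: "'a set \<Rightarrow> ('a set \<Rightarrow> bool) \<Rightarrow> 'a set \<Rightarrow> bool" where
  "flat S indep F \<longleftrightarrow> F \<subseteq> S \<and>
     (\<forall>e\<in>S - F. mrank indep (insert e F) > mrank indep F)"

definition cyclic_flat :: "'a set \<Rightarrow> ('a set \<Rightarrow> bool) \<Rightarrow> 'a set \<Rightarrow> bool" where
  "cyclic_flat S indep F \<longleftrightarrow> flat S indep F \<and>
     F = \<Union>{C. circuit S indep C \<and> C \<subseteq> F}"

text \<open>D(M): the complete sublattice of 2^S generated by the cyclic flats
  (S finite, so closure under binary unions/intersections plus the empty
   join {} and the empty meet S suffices).\<close>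
inductive_set Dlat :: "'a set \<Rightarrow> ('a set \<Rightarrow> bool) \<Rightarrow> 'a set set"
  for S indep where
  cyc: "cyclic_flat S indep F \<Longrightarrow> F \<in> Dlat S indep"
| bot: "{} \<in> Dlat S indep"
| top: "S \<in> Dlat S indep"
| un: "A \<in> Dlat S indep \<Longrightarrow> B \<in> Dlat S indep \<Longrightarrow> A \<union> B \<in> Dlat S indep"
| int: "A \<in> Dlat S indep \<Longrightarrow> B \<in> Dlat S indep \<Longrightarrow> A \<inter> B \<in> Dlat S indep"

definition free_separators :: "'a set \<Rightarrow> ('a set \<Rightarrow> bool) \<Rightarrow> 'a set set" where
  "free_separators S indep = {A. A \<subseteq> S \<and>
     (\<forall>Z. cyclic_flat S indep Z \<longrightarrow> Z \<subseteq> A \<or> A \<subseteq> Z)}"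

definition pinchpoints :: "'a set \<Rightarrow> ('a set \<Rightarrow> bool) \<Rightarrow> 'a set set" where
  "pinchpoints S indep = {X \<in> Dlat S indep. \<forall>Y\<in>Dlat S indep. X \<subseteq> Y \<or> Y \<subseteq> X}"

definition set_interval :: "'a set \<Rightarrow> 'a set \<Rightarrow> 'a set set" where
  "set_interval A B = {U. A \<subseteq> U \<and> U \<subseteq> B}"

definition covers_in :: "'a set set \<Rightarrow> 'a set \<Rightarrow> 'a set \<Rightarrow> bool" where
  "covers_in P B A \<longleftrightarrow> A \<in> P \<and> B \<in> P \<and> A \<subset> B \<and> \<not> (\<exists>U\<in>P. A \<subset> U \<and> U \<subset> B)"

end

theory Submission
  imports Defs
begin

text \<open>Only the lattice structure of \<open>\<D>(M)\<close> matters: the free separators are exactly the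
  subsets of \<open>S\<close> comparable with every member of \<open>\<D>(M)\<close>. Being comparable with the pinchpoints,
  which form a chain from \<open>{}\<close> to \<open>S\<close>, a free separator \<open>A\<close> lies between two consecutive ones
  \<open>T\<^sub>i\<^sub>-\<^sub>1 \<subset> T\<^sub>i\<close>. The sets \<open>L = \<Union>{X \<in> \<D>. X \<subseteq> A}\<close> and \<open>U = S \<inter> \<Inter>{X \<in> \<D>. A \<subseteq> X}\<close> are
  pinchpoints with \<open>L \<subseteq> A \<subseteq> U\<close>, and every member of \<open>\<D>\<close> lies below \<open>L\<close> or above \<open>U\<close>. If \<open>A\<close>
  is not an endpoint this forces \<open>L = T\<^sub>i\<^sub>-\<^sub>1\<close> and \<open>U = T\<^sub>i\<close>, leaving no room for a member
  of \<open>\<D>\<close> strictly between them. Conversely, if \<open>T\<^sub>i\<close> covers \<open>T\<^sub>i\<^sub>-\<^sub>1\<close>, every member of \<open>\<D>\<close>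
  lies below \<open>T\<^sub>i\<^sub>-\<^sub>1\<close> or above \<open>T\<^sub>i\<close>, so every set in between is a free separator.\<close>

definition comparable_with_all :: "'a set set \<Rightarrow> 'a set \<Rightarrow> bool" where
  "comparable_with_all \<D> A \<longleftrightarrow> (\<forall>X\<in>\<D>. X \<subseteq> A \<or> A \<subseteq> X)"

lemma comparable_with_all_between_members:
  assumes Union_closed: "\<And>F. F \<subseteq> \<D> \<Longrightarrow> \<Union>F \<in> \<D>"
    and Inter_closed: "\<And>F. F \<subseteq> \<D> \<Longrightarrow> S \<inter> \<Inter>F \<in> \<D>"
    and "A \<subseteq> S" and "comparable_with_all \<D> A"
  obtains L U where "L \<in> \<D>" "U \<in> \<D>" "L \<subseteq> A" "A \<subseteq> U" "\<forall>X\<in>\<D>. X \<subseteq> L \<or> U \<subseteq> X"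
    "comparable_with_all \<D> L" "comparable_with_all \<D> U"
proof -
  define L where "L = \<Union>{X\<in>\<D>. X \<subseteq> A}"
  define U where "U = S \<inter> \<Inter>{X\<in>\<D>. A \<subseteq> X}"
  have LA: "L \<subseteq> A" unfolding L_def by blast
  have AU: "A \<subseteq> U" unfolding U_def using \<open>A \<subseteq> S\<close> by blast
  have dichotomy: "\<forall>X\<in>\<D>. X \<subseteq> L \<or> U \<subseteq> X"
    using \<open>comparable_with_all \<D> A\<close> unfolding comparable_with_all_def L_def U_def by blast
  show thesis
  proof (rule that)
    show "L \<in> \<D>" unfolding L_def by (rule Union_closed) blast
    show "U \<in> \<D>" unfolding U_def by (rule Inter_closed) blast
    show "comparable_with_all \<D> L" "comparable_with_all \<D> U"
      using dichotomy LA AU unfolding comparable_with_all_def by blast+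
  qed fact+
qed

lemma comparable_with_all_if_no_member_between:
  assumes "comparable_with_all \<D> a" "comparable_with_all \<D> b"
    and "\<not> (\<exists>X\<in>\<D>. a \<subset> X \<and> X \<subset> b)" and "a \<subseteq> A" "A \<subseteq> b"
  shows "comparable_with_all \<D> A"
  unfolding comparable_with_all_def
proof
  fix X assume "X \<in> \<D>"
  then have "X \<subseteq> a \<or> a \<subseteq> X" "X \<subseteq> b \<or> b \<subseteq> X" "\<not> (a \<subset> X \<and> X \<subset> b)"
    using assms(1-3) unfolding comparable_with_all_def by auto
  then have "X \<subseteq> a \<or> b \<subseteq> X"
    by (metis dual_order.order_iff_strict)
  then show "X \<subseteq> A \<or> A \<subseteq> X"
    using \<open>a \<subseteq> A\<close> \<open>A \<subseteq> b\<close> by blast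
qed

lemma comparable_with_all_eq_endpoint_if_member_between:
  assumes Union_closed: "\<And>F. F \<subseteq> \<D> \<Longrightarrow> \<Union>F \<in> \<D>"
    and Inter_closed: "\<And>F. F \<subseteq> \<D> \<Longrightarrow> S \<inter> \<Inter>F \<in> \<D>"
    and "a \<in> \<D>" "b \<in> \<D>"
    and no_pinchpoint_between: "\<And>P. P \<in> \<D> \<Longrightarrow> comparable_with_all \<D> P \<Longrightarrow> \<not> (a \<subset> P \<and> P \<subset> b)"
    and "X \<in> \<D>" "a \<subset> X" "X \<subset> b"
    and "A \<subseteq> S" "comparable_with_all \<D> A" "a \<subseteq> A" "A \<subseteq> b"
  shows "A = a \<or> A = b"
proof (rule ccontr)
  assume "\<not> (A = a \<or> A = b)"
  then have "A \<noteq> a" "A \<noteq> b" by blast+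
  obtain L U where L: "L \<in> \<D>" "L \<subseteq> A" "comparable_with_all \<D> L"
    and U: "U \<in> \<D>" "A \<subseteq> U" "comparable_with_all \<D> U"
    and dichotomy: "\<forall>X\<in>\<D>. X \<subseteq> L \<or> U \<subseteq> X"
    using comparable_with_all_between_members[OF Union_closed Inter_closed
        \<open>A \<subseteq> S\<close> \<open>comparable_with_all \<D> A\<close>] by metis
  have "a \<subseteq> L"
    using dichotomy \<open>a \<in> \<D>\<close> U(2) \<open>a \<subseteq> A\<close> \<open>A \<noteq> a\<close> by (metis subset_antisym subset_trans)
  have "U \<subseteq> b"
    using dichotomy \<open>b \<in> \<D>\<close> L(2) \<open>A \<subseteq> b\<close> \<open>A \<noteq> b\<close> by (metis subset_antisym subset_trans)
  have "L = a"
    using no_pinchpoint_between[OF L(1,3)] \<open>a \<subseteq> L\<close> L(2) \<open>A \<subseteq> b\<close> \<open>A \<noteq> b\<close>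
    by (metis dual_order.order_iff_strict subset_antisym subset_trans)
  have "U = b"
    using no_pinchpoint_between[OF U(1,3)] \<open>U \<subseteq> b\<close> U(2) \<open>a \<subseteq> A\<close> \<open>A \<noteq> a\<close>
    by (metis dual_order.order_iff_strict subset_antisym subset_trans)
  show False
    using dichotomy \<open>X \<in> \<D>\<close> \<open>a \<subset> X\<close> \<open>X \<subset> b\<close> \<open>L = a\<close> \<open>U = b\<close> by auto
qed

lemma sorted_wrt_less_nth_mono:
  fixes xs :: "'b::order list"
  assumes "sorted_wrt (<) xs" "i \<le> j" "j < length xs"
  shows "xs ! i \<le> xs ! j"
  using assms sorted_wrt_nth_less[of "(<)" xs i j] by (cases "i = j") auto

lemma sorted_wrt_less_nth_bracket:
  fixes xs :: "'b::order list"
  assumes sorted: "sorted_wrt (<) xs" and "2 \<le> length xs"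
    and comparable: "\<forall>x\<in>set xs. x \<le> a \<or> a \<le> x"
    and "\<exists>x\<in>set xs. x \<le> a" and "\<exists>x\<in>set xs. a \<le> x"
  obtains i where "i \<in> {1..<length xs}" "xs ! (i - 1) \<le> a" "a \<le> xs ! i"
proof -
  define i where "i = (LEAST i. i < length xs \<and> a \<le> xs ! i)"
  have "\<exists>i. i < length xs \<and> a \<le> xs ! i"
    using \<open>\<exists>x\<in>set xs. a \<le> x\<close> by (auto simp: in_set_conv_nth)
  then have i: "i < length xs" "a \<le> xs ! i"
    unfolding i_def by (metis (mono_tags, lifting) LeastI_ex)+
  show thesis
  proof (cases "i = 0")
    case True
    obtain k where k: "k < length xs" "xs ! k \<le> a"
      using \<open>\<exists>x\<in>set xs. x \<le> a\<close> by (auto simp: in_set_conv_nth)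
    have "xs ! 0 \<le> xs ! k"
      using sorted_wrt_less_nth_mono[OF sorted _ k(1)] by simp
    then have "xs ! 0 \<le> a"
      using k(2) by (rule order_trans)
    moreover have "a \<le> xs ! 1"
      using i(2) True sorted_wrt_less_nth_mono[OF sorted, of 0 1] \<open>2 \<le> length xs\<close>
      by (simp add: order_trans)
    ultimately show thesis
      using that[of 1] \<open>2 \<le> length xs\<close> by simp
  next
    case False
    then have "\<not> (i - 1 < length xs \<and> a \<le> xs ! (i - 1))"
      unfolding i_def by (intro not_less_Least) simp
    then have "xs ! (i - 1) \<le> a"
      using comparable i(1) by (meson less_imp_diff_less nth_mem)
    then show thesis
      using that[of i] i False by simp
  qed
qed

lemma sorted_wrt_less_no_member_between_nth:
  fixes xs :: "'b::order list"
  assumes sorted: "sorted_wrt (<) xs" and "i \<in> {1..<length xs}"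
    and "x \<in> set xs" "xs ! (i - 1) < x" "x < xs ! i"
  shows False
proof -
  obtain k where k: "k < length xs" "x = xs ! k"
    using \<open>x \<in> set xs\<close> by (auto simp: in_set_conv_nth)
  show False
  proof (cases "k \<le> i - 1")
    case True
    then have "xs ! k \<le> xs ! (i - 1)"
      using sorted_wrt_less_nth_mono[OF sorted] assms(2) by auto
    then show False
      using assms(4) k(2) by (simp add: less_le_not_le)
  next
    case False
    then have "xs ! i \<le> xs ! k"
      using sorted_wrt_less_nth_mono[OF sorted] k(1) by auto
    then show False
      using assms(5) k(2) by (simp add: less_le_not_le)
  qed
qed

lemma Dlat_subset: "X \<in> Dlat S indep \<Longrightarrow> X \<subseteq> S"
  by (induction rule: Dlat.induct) (auto simp: cyclic_flat_def flat_def)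

lemma finite_Dlat: "finite S \<Longrightarrow> finite (Dlat S indep)"
  by (rule finite_subset[of _ "Pow S"]) (auto dest: Dlat_subset)

lemma Union_in_Dlat:
  assumes "finite S" "F \<subseteq> Dlat S indep"
  shows "\<Union>F \<in> Dlat S indep"
proof -
  have "finite F" using assms finite_Dlat finite_subset by blast
  then show ?thesis
    using assms(2) by (induction rule: finite_induct) (auto intro: Dlat.intros)
qed

lemma Inter_in_Dlat:
  assumes "finite S" "F \<subseteq> Dlat S indep"
  shows "S \<inter> \<Inter>F \<in> Dlat S indep"
proof -
  have "finite F" using assms finite_Dlat finite_subset by blast
  then show ?thesis
    using assms(2)
  proof (induction rule: finite_induct)
    case (insert X F)
    have "S \<inter> \<Inter>(insert X F) = X \<inter> (S \<inter> \<Inter>F)" by blast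
    then show ?case using insert by (auto intro: Dlat.int)
  qed (auto intro: Dlat.top)
qed

lemma comparable_with_all_Dlat_iff:
  assumes "A \<subseteq> S"
  shows "comparable_with_all (Dlat S indep) A \<longleftrightarrow>
    (\<forall>Z. cyclic_flat S indep Z \<longrightarrow> Z \<subseteq> A \<or> A \<subseteq> Z)"
proof
  assume cyclic: "\<forall>Z. cyclic_flat S indep Z \<longrightarrow> Z \<subseteq> A \<or> A \<subseteq> Z"
  have "X \<subseteq> A \<or> A \<subseteq> X" if "X \<in> Dlat S indep" for X
    using that by (induction rule: Dlat.induct) (use cyclic assms in auto)
  then show "comparable_with_all (Dlat S indep) A"
    unfolding comparable_with_all_def by blast
qed (auto simp: comparable_with_all_def intro: Dlat.cyc)

lemma free_separators_Dlat:
  "free_separators S indep = {A. A \<subseteq> S \<and> comparable_with_all (Dlat S indep) A}"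
  unfolding free_separators_def using comparable_with_all_Dlat_iff by blast

lemma pinchpoints_Dlat:
  "pinchpoints S indep = {P \<in> Dlat S indep. comparable_with_all (Dlat S indep) P}"
  unfolding pinchpoints_def comparable_with_all_def by blast

lemma pinchpoint_in_Dlat: "P \<in> pinchpoints S indep \<Longrightarrow> P \<in> Dlat S indep"
  by (simp add: pinchpoints_def)

lemma pinchpoint_comparable_with_all:
  "P \<in> pinchpoints S indep \<Longrightarrow> comparable_with_all (Dlat S indep) P"
  by (simp add: pinchpoints_Dlat)

lemma pinchpoints_subset_free_separators: "pinchpoints S indep \<subseteq> free_separators S indep"
  unfolding free_separators_Dlat
  using pinchpoint_comparable_with_all pinchpoint_in_Dlat Dlat_subset by blast

lemma empty_in_pinchpoints: "{} \<in> pinchpoints S indep"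
  unfolding pinchpoints_def by (simp add: Dlat.bot)

lemma ground_set_in_pinchpoints: "S \<in> pinchpoints S indep"
  unfolding pinchpoints_def using Dlat_subset by (blast intro: Dlat.top)

lemma free_separators_between_consecutive_pinchpoints:
  assumes "finite S" and a: "a \<in> pinchpoints S indep" and b: "b \<in> pinchpoints S indep"
    and "a \<subset> b"
    and no_pinchpoint_between: "\<And>P. P \<in> pinchpoints S indep \<Longrightarrow> \<not> (a \<subset> P \<and> P \<subset> b)"
  shows "set_interval a b \<inter> free_separators S indep =
    (if covers_in (Dlat S indep) b a then set_interval a b else {a, b})"
proof (cases "covers_in (Dlat S indep) b a")
  case True
  then have no_member_between: "\<not> (\<exists>X\<in>Dlat S indep. a \<subset> X \<and> X \<subset> b)"
    unfolding covers_in_def by simp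
  have "A \<in> free_separators S indep" if "A \<in> set_interval a b" for A
  proof -
    have "a \<subseteq> A" "A \<subseteq> b" using that unfolding set_interval_def by simp_all
    then have "comparable_with_all (Dlat S indep) A"
      using comparable_with_all_if_no_member_between pinchpoint_comparable_with_all[OF a]
        pinchpoint_comparable_with_all[OF b] no_member_between by blast
    moreover have "A \<subseteq> S"
      using \<open>A \<subseteq> b\<close> Dlat_subset[OF pinchpoint_in_Dlat[OF b]] by (rule subset_trans)
    ultimately show ?thesis unfolding free_separators_Dlat by simp
  qed
  then show ?thesis using True by auto
next
  case False
  then obtain X where X: "X \<in> Dlat S indep" "a \<subset> X" "X \<subset> b"
    using pinchpoint_in_Dlat[OF a] pinchpoint_in_Dlat[OF b] \<open>a \<subset> b\<close>
    unfolding covers_in_def by auto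
  have "A = a \<or> A = b" if A: "A \<in> set_interval a b \<inter> free_separators S indep" for A
  proof (rule comparable_with_all_eq_endpoint_if_member_between)
    show "\<And>F. F \<subseteq> Dlat S indep \<Longrightarrow> \<Union>F \<in> Dlat S indep"
      using Union_in_Dlat[OF \<open>finite S\<close>] .
    show "\<And>F. F \<subseteq> Dlat S indep \<Longrightarrow> S \<inter> \<Inter>F \<in> Dlat S indep"
      using Inter_in_Dlat[OF \<open>finite S\<close>] .
    show "\<not> (a \<subset> P \<and> P \<subset> b)"
      if "P \<in> Dlat S indep" "comparable_with_all (Dlat S indep) P" for P
      using no_pinchpoint_between that unfolding pinchpoints_Dlat by simp
    show "A \<subseteq> S" "comparable_with_all (Dlat S indep) A"
      using A unfolding free_separators_Dlat by simp_all
    show "a \<subseteq> A" "A \<subseteq> b"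
      using A unfolding set_interval_def by simp_all
  qed (use pinchpoint_in_Dlat[OF a] pinchpoint_in_Dlat[OF b] X in simp_all)
  moreover have "{a, b} \<subseteq> set_interval a b \<inter> free_separators S indep"
    using a b psubset_imp_subset[OF \<open>a \<subset> b\<close>] pinchpoints_subset_free_separators
    unfolding set_interval_def by blast
  ultimately show ?thesis using False by auto
qed

lemma length_pinchpoint_list_ge_2:
  assumes "S \<noteq> {}" and "set T = pinchpoints S indep"
  shows "2 \<le> length T"
proof -
  have "{{}, S} \<subseteq> set T"
    using assms(2) by (simp add: empty_in_pinchpoints ground_set_in_pinchpoints)
  then have "card {{}, S} \<le> card (set T)"
    by (rule card_mono[OF finite_set])
  also have "\<dots> \<le> length T"
    by (rule card_length)
  finally show ?thesis
    using assms(1) by simp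
qed

lemma free_separators_eq_Union_pinchpoint_intervals:
  assumes "S \<noteq> {}" and sorted: "sorted_wrt (\<subset>) T" and T: "set T = pinchpoints S indep"
  shows "free_separators S indep =
    (\<Union>i\<in>{1..<length T}. set_interval (T ! (i - 1)) (T ! i) \<inter> free_separators S indep)"
proof (intro equalityI subsetI)
  fix A assume A: "A \<in> free_separators S indep"
  then have "A \<subseteq> S" and "comparable_with_all (Dlat S indep) A"
    unfolding free_separators_Dlat by simp_all
  moreover have "set T \<subseteq> Dlat S indep"
    using T pinchpoint_in_Dlat by blast
  ultimately have "\<forall>P\<in>set T. P \<subseteq> A \<or> A \<subseteq> P"
    unfolding comparable_with_all_def by blast
  moreover have "\<exists>P\<in>set T. P \<subseteq> A" "\<exists>P\<in>set T. A \<subseteq> P"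
    using T \<open>A \<subseteq> S\<close> empty_in_pinchpoints[of S indep] ground_set_in_pinchpoints[of S indep]
    by blast+
  ultimately obtain i where "i \<in> {1..<length T}" "T ! (i - 1) \<subseteq> A" "A \<subseteq> T ! i"
    by (rule sorted_wrt_less_nth_bracket[OF sorted length_pinchpoint_list_ge_2[OF assms(1) T]])
  then show "A \<in> (\<Union>i\<in>{1..<length T}. set_interval (T ! (i - 1)) (T ! i) \<inter> free_separators S indep)"
    using A unfolding set_interval_def by blast
qed blast

lemma consecutive_pinchpoints:
  assumes sorted: "sorted_wrt (\<subset>) T" and T: "set T = pinchpoints S indep"
    and i: "i \<in> {1..<length T}"
  shows "T ! (i - 1) \<in> pinchpoints S indep" "T ! i \<in> pinchpoints S indep"
    and "T ! (i - 1) \<subset> T ! i"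
    and "\<And>P. P \<in> pinchpoints S indep \<Longrightarrow> \<not> (T ! (i - 1) \<subset> P \<and> P \<subset> T ! i)"
proof -
  have "T ! (i - 1) \<in> set T" "T ! i \<in> set T"
    using i by (simp_all add: less_imp_diff_less)
  then show "T ! (i - 1) \<in> pinchpoints S indep" "T ! i \<in> pinchpoints S indep"
    unfolding T .
  show "T ! (i - 1) \<subset> T ! i"
    using i by (intro sorted_wrt_nth_less[OF sorted]) simp_all
  show "\<not> (T ! (i - 1) \<subset> P \<and> P \<subset> T ! i)" if "P \<in> pinchpoints S indep" for P
    using sorted_wrt_less_no_member_between_nth[OF sorted i] that unfolding T by blast
qed

theorem proposition6p15:
  fixes S :: "'a set" and indep :: "'a set \<Rightarrow> bool" and T :: "'a set list"
  assumes "matroid S indep"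
    and "S \<noteq> {}"
    and "sorted_wrt (\<subset>) T"
    and "set T = pinchpoints S indep"
  shows "free_separators S indep =
           (\<Union>i\<in>{1..<length T}. set_interval (T ! (i - 1)) (T ! i) \<inter> free_separators S indep)
         \<and> (\<forall>i\<in>{1..<length T}.
           set_interval (T ! (i - 1)) (T ! i) \<inter> free_separators S indep =
           (if covers_in (Dlat S indep) (T ! i) (T ! (i - 1))
            then set_interval (T ! (i - 1)) (T ! i)
            else {T ! (i - 1), T ! i}))"
proof -
  have "finite S"
    using assms(1) by (simp add: matroid_def)
  then show ?thesis
    by (intro conjI ballI free_separators_eq_Union_pinchpoint_intervals[OF assms(2-4)]
        free_separators_between_consecutive_pinchpoints consecutive_pinchpoints[OF assms(3,4)])
qed

end
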